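(* There is a randomized algorithm that, for any finite family $\mathcal{F}\subset\mathbb{R}^{n\times n}$, any $\epsilon,\delta\in(0,1)$, and any unknown $\mathbf{A}\in\mathbb{R}^{n\times n}$ accessible only via vector-matrix-vector queries $(\mathbf{x},\mathbf{y})\mapsto\mathbf{x}^\mathsf{T}\mathbf{A}\mathbf{y}$, issues $O(\log(|\mathcal{F}|/\delta)/\epsilon^2)$ such queries and, with probability greater than $1-\delta$, returns $\tilde{\mathbf{B}}\in\mathcal{F}$ satisfying $\|\mathbf{A}-\tilde{\mathbf{B}}\|_\mathsf{F}\le(1+\epsilon)\min_{\mathbf{B}\in\mathcal{F}}\|\mathbf{A}-\mathbf{B}\|_\mathsf{F}$.
   Context: In the vector-matrix-vector query model the algorithm knows $\mathcal{F}$ and may query the scalar $\mathbf{x}^\mathsf{T}\mathbf{A}\mathbf{y}$ for vectors $\mathbf{x},\mathbf{y}\in\mathbb{R}^n$ of its choice. *)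

theory Defs
  imports "HOL-Probability.Probability"
begin

text \<open>Real n x n matrices are modelled as functions nat => nat => real (only entries with
indices < n matter); vectors in R^n as nat => real (only entries < n matter).\<close>

type_synonym rvec = "nat \<Rightarrow> real"
type_synonym rmat = "nat \<Rightarrow> nat \<Rightarrow> real"

definition vmv :: "nat \<Rightarrow> rmat \<Rightarrow> rvec \<Rightarrow> rvec \<Rightarrow> real" where
  "vmv n A x y = (\<Sum>i<n. \<Sum>j<n. x i * A i j * y j)"

definition frob_dist :: "nat \<Rightarrow> rmat \<Rightarrow> rmat \<Rightarrow> real" where
  "frob_dist n A B = sqrt (\<Sum>i<n. \<Sum>j<n. (A i j - B i j)^2)"

text \<open>Adaptive query transcript: a strategy Q chooses the next query pair from the answers
obtained so far; run_queries n Q A k is the list of the first k answers.\<close>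
fun run_queries :: "nat \<Rightarrow> (real list \<Rightarrow> rvec \<times> rvec) \<Rightarrow> rmat \<Rightarrow> nat \<Rightarrow> real list" where
  "run_queries n Q A 0 = []"
| "run_queries n Q A (Suc k) =
     (let as = run_queries n Q A k in as @ [vmv n A (fst (Q as)) (snd (Q as))])"

end

theory Submission
  imports Defs
begin

(* For independent Rademacher vectors x and y, the square of the query x^T M y is an unbiased
   estimator of the squared Frobenius norm of M, with fourth moment at most 9 times its square
   (a Khintchine-type bound, proved by adding one coordinate at a time). Since
   x^T (A - B) y = x^T A y - x^T B y, a single batch of queries to A yields such estimators of
   the squared distance from A to every candidate B at once. Averaging m = O(1/eps^2) squares
   gives a relative error of at most eps/3 with probability 3/4 (Chebyshev); the median of
   G = O(log(|F|/delta)) independent averages fails with probability at most delta/|F|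
   (Hoeffding); after a union bound over F, the candidate with the smallest estimate is within
   a factor 1 + eps of the best one. *)

section \<open>Expectations over finitely supported distributions\<close>

lemma finite_set_Pi_pmf:
  assumes "finite I" "\<And>i. i \<in> I \<Longrightarrow> finite (set_pmf (p i))"
  shows "finite (set_pmf (Pi_pmf I d p))"
  using assms by (subst set_Pi_pmf) (auto intro!: finite_PiE_dflt)

lemma expectation_add_finite:
  fixes f g :: "'a \<Rightarrow> real"
  assumes "finite (set_pmf p)"
  shows "measure_pmf.expectation p (\<lambda>x. f x + g x) =
    measure_pmf.expectation p f + measure_pmf.expectation p g"
  using assms by (intro Bochner_Integration.integral_add integrable_measure_pmf_finite)

lemma expectation_mono_finite:
  fixes f g :: "'a \<Rightarrow> real"
  assumes "finite (set_pmf p)" "\<And>x. x \<in> set_pmf p \<Longrightarrow> f x \<le> g x"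
  shows "measure_pmf.expectation p f \<le> measure_pmf.expectation p g"
  using assms
  by (intro integral_mono_AE integrable_measure_pmf_finite) (auto simp: AE_measure_pmf_iff)

lemma expectation_pair_pmf_finite:
  fixes h :: "'a \<times> 'b \<Rightarrow> real"
  assumes "finite (set_pmf p)" "finite (set_pmf q)"
  shows "measure_pmf.expectation (pair_pmf p q) h =
    measure_pmf.expectation p (\<lambda>a. measure_pmf.expectation q (\<lambda>b. h (a, b)))"
proof -
  have "measure_pmf.expectation (pair_pmf p q) h =
      (\<Sum>x\<in>set_pmf p \<times> set_pmf q. h x * pmf (pair_pmf p q) x)"
    using assms by (intro integral_measure_pmf_real) auto
  also have "\<dots> = (\<Sum>a\<in>set_pmf p. \<Sum>b\<in>set_pmf q. h (a, b) * (pmf p a * pmf q b))"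
    by (subst sum.cartesian_product) (auto simp: pmf_pair case_prod_unfold intro!: sum.cong)
  also have "\<dots> = (\<Sum>a\<in>set_pmf p. (\<Sum>b\<in>set_pmf q. h (a, b) * pmf q b) * pmf p a)"
    by (simp add: sum_distrib_left sum_distrib_right mult_ac)
  also have "\<dots> = measure_pmf.expectation p (\<lambda>a. measure_pmf.expectation q (\<lambda>b. h (a, b)))"
    using assms by (simp add: integral_measure_pmf_real[where A = "set_pmf q"]
                              integral_measure_pmf_real[where A = "set_pmf p"])
  finally show ?thesis .
qed

lemma expectation_Pi_pmf_insert:
  fixes h :: "('a \<Rightarrow> 'b) \<Rightarrow> real"
  assumes "finite I" "a \<notin> I" "finite (set_pmf (p a))" "finite (set_pmf (Pi_pmf I d p))"
  shows "measure_pmf.expectation (Pi_pmf (insert a I) d p) h =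
    measure_pmf.expectation (p a)
      (\<lambda>y. measure_pmf.expectation (Pi_pmf I d p) (\<lambda>f. h (f(a := y))))"
  using assms by (simp add: Pi_pmf_insert expectation_pair_pmf_finite case_prod_unfold)

lemma expectation_Pi_pmf_component:
  fixes g :: "'b \<Rightarrow> real"
  assumes "finite I" "i \<in> I"
  shows "measure_pmf.expectation (Pi_pmf I d p) (\<lambda>f. g (f i)) = measure_pmf.expectation (p i) g"
proof -
  have "measure_pmf.expectation (Pi_pmf I d p) (\<lambda>f. g (f i)) =
      measure_pmf.expectation (map_pmf (\<lambda>f. f i) (Pi_pmf I d p)) g"
    by simp
  then show ?thesis
    using assms by (simp add: Pi_pmf_component)
qed

section \<open>Rademacher vectors\<close>

definition rademacher :: "real pmf" where
  "rademacher = pmf_of_set {-1, 1}"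

lemma set_pmf_rademacher [simp]: "set_pmf rademacher = {-1, 1}"
  unfolding rademacher_def by (subst set_pmf_of_set) auto

lemma expectation_rademacher:
  fixes f :: "real \<Rightarrow> real"
  shows "measure_pmf.expectation rademacher f = (f (-1) + f 1) / 2"
  unfolding rademacher_def by (subst integral_pmf_of_set) auto

definition rademacher_vec :: "nat set \<Rightarrow> (nat \<Rightarrow> real) pmf" where
  "rademacher_vec I = Pi_pmf I 0 (\<lambda>_. rademacher)"

lemma finite_set_pmf_rademacher_vec: "finite I \<Longrightarrow> finite (set_pmf (rademacher_vec I))"
  unfolding rademacher_vec_def by (rule finite_set_Pi_pmf) auto

lemma expectation_rademacher_vec_insert:
  fixes h :: "(nat \<Rightarrow> real) \<Rightarrow> real"
  assumes "finite I" "a \<notin> I"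
  shows "measure_pmf.expectation (rademacher_vec (insert a I)) h =
    measure_pmf.expectation (rademacher_vec I) (\<lambda>x. (h (x(a := -1)) + h (x(a := 1))) / 2)"
proof -
  have fin: "finite (set_pmf (rademacher_vec I))"
    using assms(1) by (rule finite_set_pmf_rademacher_vec)
  have "measure_pmf.expectation (rademacher_vec (insert a I)) h =
      (measure_pmf.expectation (rademacher_vec I) (\<lambda>x. h (x(a := -1))) +
       measure_pmf.expectation (rademacher_vec I) (\<lambda>x. h (x(a := 1)))) / 2"
    using assms fin unfolding rademacher_vec_def
    by (simp add: expectation_Pi_pmf_insert expectation_rademacher)
  also have "\<dots> =
      measure_pmf.expectation (rademacher_vec I) (\<lambda>x. (h (x(a := -1)) + h (x(a := 1))) / 2)"
    using fin by (simp add: expectation_add_finite)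
  finally show ?thesis .
qed

definition row_comb_sq_norm :: "nat set \<Rightarrow> nat set \<Rightarrow> rmat \<Rightarrow> (nat \<Rightarrow> real) \<Rightarrow> real" where
  "row_comb_sq_norm I J u x = (\<Sum>j\<in>J. (\<Sum>i\<in>I. x i * u i j)\<^sup>2)"

lemma row_comb_sq_norm_insert:
  assumes "finite I" "a \<notin> I" "y\<^sup>2 = 1"
  shows "row_comb_sq_norm (insert a I) J u (x(a := y)) =
    row_comb_sq_norm I J u x + 2 * y * (\<Sum>j\<in>J. (\<Sum>i\<in>I. x i * u i j) * u a j) +
      (\<Sum>j\<in>J. (u a j)\<^sup>2)"
proof -
  have "(\<Sum>i\<in>insert a I. (x(a := y)) i * u i j) = y * u a j + (\<Sum>i\<in>I. x i * u i j)" for j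
  proof -
    have "(\<Sum>i\<in>I. (x(a := y)) i * u i j) = (\<Sum>i\<in>I. x i * u i j)"
      using assms(2) by (intro sum.cong) auto
    then show ?thesis
      using assms(1,2) by simp
  qed
  then show ?thesis
    using assms(3)
    by (simp add: row_comb_sq_norm_def power2_sum power_mult_distrib sum.distrib sum_distrib_left
        algebra_simps)
qed

lemma expectation_row_comb_sq_norm:
  assumes "finite I"
  shows "measure_pmf.expectation (rademacher_vec I) (row_comb_sq_norm I J u) =
    (\<Sum>i\<in>I. \<Sum>j\<in>J. (u i j)\<^sup>2)"
  using assms
proof (induction I rule: finite_induct)
  case empty
  show ?case
    by (simp add: rademacher_vec_def row_comb_sq_norm_def)
next
  case (insert a I)
  define U where "U = (\<Sum>j\<in>J. (u a j)\<^sup>2)"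
  have avg: "(row_comb_sq_norm (insert a I) J u (x(a := -1)) +
      row_comb_sq_norm (insert a I) J u (x(a := 1))) / 2 = row_comb_sq_norm I J u x + U" for x
    using insert.hyps by (simp add: row_comb_sq_norm_insert U_def field_simps)
  have "measure_pmf.expectation (rademacher_vec (insert a I)) (row_comb_sq_norm (insert a I) J u) =
      measure_pmf.expectation (rademacher_vec I) (\<lambda>x. row_comb_sq_norm I J u x + U)"
    using insert.hyps by (simp add: expectation_rademacher_vec_insert avg)
  also have "\<dots> = (\<Sum>i\<in>I. \<Sum>j\<in>J. (u i j)\<^sup>2) + U"
    using insert finite_set_pmf_rademacher_vec by (simp add: expectation_add_finite)
  finally show ?case
    using insert.hyps by (simp add: U_def)
qed

lemma expectation_row_comb_sq_norm_sq_le: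
  assumes "finite I"
  shows "measure_pmf.expectation (rademacher_vec I) (\<lambda>x. (row_comb_sq_norm I J u x)\<^sup>2) \<le>
    3 * (\<Sum>i\<in>I. \<Sum>j\<in>J. (u i j)\<^sup>2)\<^sup>2"
  using assms
proof (induction I rule: finite_induct)
  case empty
  show ?case
    by (simp add: rademacher_vec_def row_comb_sq_norm_def)
next
  case (insert a I)
  define N where "N = row_comb_sq_norm I J u"
  define D where "D = (\<lambda>x. \<Sum>j\<in>J. (\<Sum>i\<in>I. x i * u i j) * u a j)"
  define U where "U = (\<Sum>j\<in>J. (u a j)\<^sup>2)"
  define T where "T = (\<Sum>i\<in>I. \<Sum>j\<in>J. (u i j)\<^sup>2)"
  have fin: "finite (set_pmf (rademacher_vec I))"
    using insert.hyps by (simp add: finite_set_pmf_rademacher_vec)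
  have "U \<ge> 0" "T \<ge> 0"
    unfolding U_def T_def by (auto intro!: sum_nonneg)
  have avg: "((row_comb_sq_norm (insert a I) J u (x(a := -1)))\<^sup>2 +
      (row_comb_sq_norm (insert a I) J u (x(a := 1)))\<^sup>2) / 2 \<le> (N x)\<^sup>2 + 6 * U * N x + U\<^sup>2" for x
  proof -
    have "(D x)\<^sup>2 \<le> N x * U"
      unfolding D_def N_def U_def row_comb_sq_norm_def by (rule Cauchy_Schwarz_ineq_sum)
    have "((row_comb_sq_norm (insert a I) J u (x(a := -1)))\<^sup>2 +
        (row_comb_sq_norm (insert a I) J u (x(a := 1)))\<^sup>2) / 2 = (N x + U)\<^sup>2 + 4 * (D x)\<^sup>2"
      using insert.hyps
      by (simp add: row_comb_sq_norm_insert N_def D_def U_def power2_eq_square algebra_simps)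
    also have "\<dots> \<le> (N x)\<^sup>2 + 6 * U * N x + U\<^sup>2"
      using \<open>(D x)\<^sup>2 \<le> N x * U\<close> by (simp add: power2_eq_square algebra_simps)
    finally show ?thesis .
  qed
  have "measure_pmf.expectation (rademacher_vec (insert a I))
      (\<lambda>x. (row_comb_sq_norm (insert a I) J u x)\<^sup>2) \<le>
      measure_pmf.expectation (rademacher_vec I) (\<lambda>x. (N x)\<^sup>2 + 6 * U * N x + U\<^sup>2)"
    unfolding expectation_rademacher_vec_insert[OF insert.hyps]
    by (rule expectation_mono_finite[OF fin avg])
  also have "\<dots> = measure_pmf.expectation (rademacher_vec I) (\<lambda>x. (N x)\<^sup>2) + 6 * U * T + U\<^sup>2"
    using fin insert.hyps
    by (simp add: expectation_add_finite expectation_row_comb_sq_norm N_def T_def)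
  also have "\<dots> \<le> 3 * T\<^sup>2 + 6 * U * T + U\<^sup>2"
    using insert.IH by (simp add: N_def T_def)
  also have "\<dots> \<le> 3 * (T + U)\<^sup>2"
    using \<open>U \<ge> 0\<close> \<open>T \<ge> 0\<close> by (simp add: power2_eq_square algebra_simps)
  finally show ?case
    using insert.hyps by (simp add: T_def U_def add.commute)
qed

section \<open>Moments of a random bilinear query\<close>

definition rademacher_pair :: "nat \<Rightarrow> (rvec \<times> rvec) pmf" where
  "rademacher_pair n = pair_pmf (rademacher_vec {..<n}) (rademacher_vec {..<n})"

definition frob_sq :: "nat \<Rightarrow> rmat \<Rightarrow> real" where
  "frob_sq n M = (\<Sum>i<n. \<Sum>j<n. (M i j)\<^sup>2)"

lemma frob_sq_nonneg: "frob_sq n M \<ge> 0"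
  unfolding frob_sq_def by (intro sum_nonneg) auto

lemma vmv_eq_0_if_frob_sq_eq_0: "frob_sq n M = 0 \<Longrightarrow> vmv n M x y = 0"
  unfolding frob_sq_def vmv_def by (simp add: sum_nonneg_eq_0_iff sum_nonneg)

lemma frob_dist_eq_sqrt_frob_sq: "frob_dist n A B = sqrt (frob_sq n (A - B))"
  unfolding frob_dist_def frob_sq_def by simp

lemma vmv_diff: "vmv n A x y - vmv n B x y = vmv n (A - B) x y"
  unfolding vmv_def by (simp add: sum_subtractf[symmetric] algebra_simps)

lemma finite_set_pmf_rademacher_pair: "finite (set_pmf (rademacher_pair n))"
  unfolding rademacher_pair_def by (simp add: finite_set_pmf_rademacher_vec)

text \<open>For fixed x the query is a Rademacher combination of the entries of the row vector
  x^T M; the moment bounds are therefore applied twice, first in y and then in x.\<close>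

lemma sq_vmv_eq_row_comb_sq_norm:
  "(vmv n M x y)\<^sup>2 = row_comb_sq_norm {..<n} {0} (\<lambda>j _. \<Sum>i<n. x i * M i j) y"
  unfolding vmv_def row_comb_sq_norm_def
  by (subst sum.swap) (simp add: sum_distrib_left mult_ac)

lemma expectation_sq_vmv:
  "measure_pmf.expectation (rademacher_pair n) (\<lambda>w. (vmv n M (fst w) (snd w))\<^sup>2) = frob_sq n M"
proof -
  have "measure_pmf.expectation (rademacher_vec {..<n}) (\<lambda>y. (vmv n M x y)\<^sup>2) =
      row_comb_sq_norm {..<n} {..<n} M x" for x
    unfolding sq_vmv_eq_row_comb_sq_norm expectation_row_comb_sq_norm[OF finite_lessThan]
    by (simp add: row_comb_sq_norm_def)
  then show ?thesis
    by (simp add: rademacher_pair_def expectation_pair_pmf_finite finite_set_pmf_rademacher_vec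
        expectation_row_comb_sq_norm frob_sq_def)
qed

lemma expectation_vmv_fourth_power_le:
  "measure_pmf.expectation (rademacher_pair n) (\<lambda>w. ((vmv n M (fst w) (snd w))\<^sup>2)\<^sup>2) \<le>
    9 * (frob_sq n M)\<^sup>2"
proof -
  have fin: "finite (set_pmf (rademacher_vec {..<n}))"
    by (simp add: finite_set_pmf_rademacher_vec)
  have inner: "measure_pmf.expectation (rademacher_vec {..<n}) (\<lambda>y. ((vmv n M x y)\<^sup>2)\<^sup>2) \<le>
      3 * (row_comb_sq_norm {..<n} {..<n} M x)\<^sup>2" for x
    using expectation_row_comb_sq_norm_sq_le[of "{..<n}" "{0}" "\<lambda>j _. \<Sum>i<n. x i * M i j"]
    by (simp add: sq_vmv_eq_row_comb_sq_norm row_comb_sq_norm_def)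
  have "measure_pmf.expectation (rademacher_pair n) (\<lambda>w. ((vmv n M (fst w) (snd w))\<^sup>2)\<^sup>2) \<le>
      measure_pmf.expectation (rademacher_vec {..<n})
        (\<lambda>x. 3 * (row_comb_sq_norm {..<n} {..<n} M x)\<^sup>2)"
    unfolding rademacher_pair_def expectation_pair_pmf_finite[OF fin fin]
    using inner by (intro expectation_mono_finite fin) simp
  also have "\<dots> \<le> 9 * (frob_sq n M)\<^sup>2"
    using expectation_row_comb_sq_norm_sq_le[of "{..<n}" "{..<n}" M] by (simp add: frob_sq_def)
  finally show ?thesis .
qed

section \<open>Concentration of averages and medians\<close>

lemma expectation_sq_sum_iid:
  fixes g :: "'a \<Rightarrow> real"
  assumes "finite I" "finite (set_pmf p)" "measure_pmf.expectation p g = 0"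
  shows "measure_pmf.expectation (Pi_pmf I d (\<lambda>_. p)) (\<lambda>W. (\<Sum>s\<in>I. g (W s))\<^sup>2) =
    card I * measure_pmf.expectation p (\<lambda>w. (g w)\<^sup>2)"
  using assms(1)
proof (induction I rule: finite_induct)
  case empty
  show ?case by simp
next
  case (insert a I)
  define S where "S = (\<lambda>f. \<Sum>s\<in>I. g (f s))"
  define c where "c = measure_pmf.expectation p (\<lambda>w. (g w)\<^sup>2)"
  let ?P = "Pi_pmf I d (\<lambda>_. p)"
  have fin: "finite (set_pmf ?P)"
    using insert.hyps assms by (intro finite_set_Pi_pmf) auto
  have sum_upd: "(\<Sum>s\<in>insert a I. g ((f(a := y)) s)) = g y + S f" for f y
  proof -
    have "(\<Sum>s\<in>I. g ((f(a := y)) s)) = S f"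
      unfolding S_def using insert.hyps by (intro sum.cong) auto
    then show ?thesis
      using insert.hyps by simp
  qed
  have ES: "measure_pmf.expectation ?P S = 0"
    unfolding S_def using fin insert.hyps assms(3)
    by (simp add: Bochner_Integration.integral_sum integrable_measure_pmf_finite
        expectation_Pi_pmf_component)
  have ES2: "measure_pmf.expectation ?P (\<lambda>f. (S f)\<^sup>2) = card I * c"
    using insert.IH by (simp add: S_def c_def)
  have inner: "measure_pmf.expectation ?P (\<lambda>f. (g y + S f)\<^sup>2) = (g y)\<^sup>2 + card I * c" for y
  proof -
    have "measure_pmf.expectation ?P (\<lambda>f. (g y + S f)\<^sup>2) =
        measure_pmf.expectation ?P (\<lambda>f. ((g y)\<^sup>2 + 2 * g y * S f) + (S f)\<^sup>2)"
      by (simp add: power2_eq_square algebra_simps)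
    also have "\<dots> = (g y)\<^sup>2 + 2 * g y * measure_pmf.expectation ?P S + card I * c"
      using fin ES2 by (simp add: expectation_add_finite)
    finally show ?thesis
      using ES by simp
  qed
  have "measure_pmf.expectation (Pi_pmf (insert a I) d (\<lambda>_. p))
      (\<lambda>W. (\<Sum>s\<in>insert a I. g (W s))\<^sup>2) =
    measure_pmf.expectation p
      (\<lambda>y. measure_pmf.expectation ?P (\<lambda>f. (\<Sum>s\<in>insert a I. g ((f(a := y)) s))\<^sup>2))"
    using insert.hyps fin assms(2) by (intro expectation_Pi_pmf_insert) auto
  also have "\<dots> = measure_pmf.expectation p (\<lambda>y. (g y)\<^sup>2 + card I * c)"
    by (simp only: sum_upd inner)
  also have "\<dots> = c + card I * c"
    using assms(2) by (simp add: expectation_add_finite c_def)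
  finally show ?case
    using insert.hyps by (simp add: c_def algebra_simps)
qed

lemma prob_sum_iid_deviation_le:
  fixes g :: "'a \<Rightarrow> real" and m :: nat and \<sigma>2 :: real
  assumes "finite (set_pmf p)" "measure_pmf.expectation p g = 0"
    and "measure_pmf.expectation p (\<lambda>w. (g w)\<^sup>2) \<le> \<sigma>2" and "c > 0"
  shows "measure_pmf.prob (Pi_pmf {..<m} d (\<lambda>_. p)) {W. c \<le> \<bar>\<Sum>s<m. g (W s)\<bar>} \<le>
    m * \<sigma>2 / c\<^sup>2"
proof -
  let ?P = "Pi_pmf {..<m} d (\<lambda>_. p)"
  have fin: "finite (set_pmf ?P)"
    using assms(1) by (intro finite_set_Pi_pmf) auto
  have "measure_pmf.prob ?P {W. c \<le> \<bar>\<Sum>s<m. g (W s)\<bar>} =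
      measure_pmf.prob ?P {W \<in> space (measure_pmf ?P). c\<^sup>2 \<le> (\<Sum>s<m. g (W s))\<^sup>2}"
    using assms(4)
    by (auto simp: abs_le_square_iff[symmetric] intro!: arg_cong[where f = "measure _"])
  also have "\<dots> \<le> measure_pmf.expectation ?P (\<lambda>W. (\<Sum>s<m. g (W s))\<^sup>2) / c\<^sup>2"
    using assms(4) fin
    by (intro integral_Markov_inequality_measure[where A = UNIV] integrable_measure_pmf_finite) auto
  also have "\<dots> \<le> m * \<sigma>2 / c\<^sup>2"
    using assms by (simp add: expectation_sq_sum_iid divide_right_mono mult_left_mono)
  finally show ?thesis .
qed

definition group_sum :: "nat \<Rightarrow> nat \<Rightarrow> rmat \<Rightarrow> (nat \<Rightarrow> rvec \<times> rvec) \<Rightarrow> real" where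
  "group_sum n m M w = (\<Sum>s<m. (vmv n M (fst (w s)) (snd (w s)))\<^sup>2)"

lemma prob_group_sum_inaccurate_le:
  assumes "m > 0" "\<eta> > 0" "32 \<le> real m * \<eta>\<^sup>2"
  shows "measure_pmf.prob (Pi_pmf {..<m} d (\<lambda>_. rademacher_pair n))
      {w. m * \<eta> * frob_sq n M < \<bar>group_sum n m M w - m * frob_sq n M\<bar>} \<le> 1/4"
proof (cases "frob_sq n M = 0")
  case True
  then show ?thesis
    by (simp add: group_sum_def vmv_eq_0_if_frob_sq_eq_0)
next
  case False
  define \<mu> where "\<mu> = frob_sq n M"
  define g where "g = (\<lambda>w. (vmv n M (fst w) (snd w))\<^sup>2 - \<mu>)"
  have "\<mu> > 0"
    using False frob_sq_nonneg[of n M] by (simp add: \<mu>_def)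
  have fin: "finite (set_pmf (rademacher_pair n))"
    by (rule finite_set_pmf_rademacher_pair)
  have Eg: "measure_pmf.expectation (rademacher_pair n) g = 0"
    using fin unfolding g_def
    by (simp add: Bochner_Integration.integral_diff integrable_measure_pmf_finite
        expectation_sq_vmv \<mu>_def)
  have "measure_pmf.expectation (rademacher_pair n) (\<lambda>w. (g w)\<^sup>2) =
      measure_pmf.expectation (rademacher_pair n) (\<lambda>w. ((vmv n M (fst w) (snd w))\<^sup>2)\<^sup>2 +
        (- 2 * \<mu>) * (vmv n M (fst w) (snd w))\<^sup>2 + \<mu>\<^sup>2)"
    by (simp add: g_def power2_eq_square algebra_simps)
  also have "\<dots> =
      measure_pmf.expectation (rademacher_pair n) (\<lambda>w. ((vmv n M (fst w) (snd w))\<^sup>2)\<^sup>2) +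
      (- 2 * \<mu>) * \<mu> + \<mu>\<^sup>2"
    by (simp only: expectation_add_finite[OF fin]) (simp add: expectation_sq_vmv \<mu>_def)
  also have "\<dots> \<le> 9 * \<mu>\<^sup>2 - 2 * \<mu> * \<mu> + \<mu>\<^sup>2"
    using expectation_vmv_fourth_power_le[of n M] by (simp add: \<mu>_def)
  finally have Eg2: "measure_pmf.expectation (rademacher_pair n) (\<lambda>w. (g w)\<^sup>2) \<le> 8 * \<mu>\<^sup>2"
    by (simp add: power2_eq_square)
  have "measure_pmf.prob (Pi_pmf {..<m} d (\<lambda>_. rademacher_pair n))
      {w. m * \<eta> * \<mu> < \<bar>group_sum n m M w - m * \<mu>\<bar>} \<le>
      measure_pmf.prob (Pi_pmf {..<m} d (\<lambda>_. rademacher_pair n))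
        {w. m * \<eta> * \<mu> \<le> \<bar>\<Sum>s<m. g (w s)\<bar>}"
    by (intro measure_pmf.finite_measure_mono)
       (auto simp: group_sum_def g_def sum_subtractf)
  also have "\<dots> \<le> m * (8 * \<mu>\<^sup>2) / (m * \<eta> * \<mu>)\<^sup>2"
    using assms \<open>\<mu> > 0\<close> by (intro prob_sum_iid_deviation_le[OF fin Eg Eg2]) auto
  also have "\<dots> = 8 / (m * \<eta>\<^sup>2)"
    using assms \<open>\<mu> > 0\<close> by (simp add: power2_eq_square field_simps)
  also have "\<dots> \<le> 1/4"
    using assms by (simp add: field_simps)
  finally show ?thesis
    by (simp add: \<mu>_def)
qed

lemma prob_majority_bad_le:
  fixes P :: "'a pmf" and bad :: "'a \<Rightarrow> bool"
  assumes "G > 0" and bad: "measure_pmf.prob P {w. bad w} \<le> 1/4"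
  shows "measure_pmf.prob (Pi_pmf {..<G} d (\<lambda>_. P))
      {W. G \<le> 2 * card {g\<in>{..<G}. bad (W g)}} \<le> exp (- (G / 8))"
proof -
  let ?P = "Pi_pmf {..<G} d (\<lambda>_. P)"
  define X where "X = (\<lambda>g (W :: nat \<Rightarrow> 'a). if bad (W g) then 1 else (0::real))"
  define \<mu> where "\<mu> = (\<Sum>g<G. measure_pmf.expectation ?P (X g))"
  interpret Hoeffding_ineq "measure_pmf ?P" "{..<G}" X "\<lambda>_. 0" "\<lambda>_. 1" \<mu>
  proof unfold_locales
    show "prob_space.indep_vars (measure_pmf ?P) (\<lambda>_. borel) X {..<G}"
      unfolding X_def
      by (rule prob_space.indep_vars_compose2[OF measure_pmf.prob_space_axioms
            indep_vars_Pi_pmf[of "{..<G}" d "\<lambda>_. P"]]) auto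
  qed (auto simp: X_def \<mu>_def)
  have "measure_pmf.expectation ?P (X g) \<le> 1/4" if "g < G" for g
  proof -
    have "X g = (\<lambda>W. indicator {w. bad w} (W g))"
      by (auto simp: X_def indicator_def)
    then have "measure_pmf.expectation ?P (X g) = measure_pmf.expectation P (indicator {w. bad w})"
      using that by (simp add: expectation_Pi_pmf_component)
    then show ?thesis
      using bad by simp
  qed
  then have "\<mu> \<le> G / 4"
    unfolding \<mu>_def using sum_mono[of "{..<G}" "\<lambda>g. measure_pmf.expectation ?P (X g)" "\<lambda>_. 1/4"]
    by simp
  moreover have "(\<Sum>g<G. X g W) = card {g\<in>{..<G}. bad (W g)}" for W
    unfolding X_def by (simp add: sum.If_cases Int_def)
  ultimately have "measure_pmf.prob ?P {W. G \<le> 2 * card {g\<in>{..<G}. bad (W g)}} \<le>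
      measure_pmf.prob ?P {W \<in> space (measure_pmf ?P). \<mu> + G / 4 \<le> (\<Sum>g<G. X g W)}"
    by (intro measure_pmf.finite_measure_mono) auto
  also have "\<dots> \<le> exp (- 2 * (G / 4)\<^sup>2 / (\<Sum>g<G. (1 - 0)\<^sup>2))"
    using Hoeffding_ineq_ge[of "G / 4"] assms(1) by simp
  also have "\<dots> = exp (- (G / 8))"
    using assms(1) by (simp add: power2_eq_square field_simps)
  finally show ?thesis .
qed

definition median_of :: "nat \<Rightarrow> (nat \<Rightarrow> real) \<Rightarrow> real" where
  "median_of G f = Min (f ` {h\<in>{..<G}. G < 2 * card {g\<in>{..<G}. f g \<le> f h}})"

lemma median_of_cong:
  assumes "\<And>g. g < G \<Longrightarrow> f g = f' g"
  shows "median_of G f = median_of G f'"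
proof -
  have "{g\<in>{..<G}. f g \<le> f h} = {g\<in>{..<G}. f' g \<le> f' h}" if "h < G" for h
    using assms that by auto
  then have "{h\<in>{..<G}. G < 2 * card {g\<in>{..<G}. f g \<le> f h}} =
      {h\<in>{..<G}. G < 2 * card {g\<in>{..<G}. f' g \<le> f' h}}"
    by auto
  then show ?thesis
    unfolding median_of_def using assms by (auto intro!: arg_cong[where f = Min] image_cong)
qed

lemma median_of_between:
  assumes "2 * card {g\<in>{..<G}. f g \<notin> {lo..hi}} < G"
  shows "median_of G f \<in> {lo..hi}"
proof -
  define good where "good = {g\<in>{..<G}. f g \<in> {lo..hi}}"
  define bad where "bad = {g\<in>{..<G}. f g \<notin> {lo..hi}}"
  define S where "S = {h\<in>{..<G}. G < 2 * card {g\<in>{..<G}. f g \<le> f h}}"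
  have "{..<G} = good \<union> bad" "good \<inter> bad = {}"
    by (auto simp: good_def bad_def)
  then have "card good + card bad = G"
    by (metis card_Un_disjoint card_lessThan finite_Un finite_lessThan)
  then have "G < 2 * card good"
    using assms by (simp add: bad_def)
  then have "good \<noteq> {}"
    by auto
  have finite_good: "finite good"
    by (simp add: good_def)
  have "Max (f ` good) \<in> f ` good"
    using \<open>good \<noteq> {}\<close> by (intro Max_in) (auto simp: good_def)
  then obtain h where h: "h \<in> good" "Max (f ` good) = f h"
    by auto
  have "f g \<le> f h" if "g \<in> good" for g
    using h(2) that by (metis Max_ge finite_imageI imageI finite_good)
  then have "good \<subseteq> {g\<in>{..<G}. f g \<le> f h}"
    by (auto simp: good_def)
  then have "card good \<le> card {g\<in>{..<G}. f g \<le> f h}"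
    by (intro card_mono) auto
  then have "h \<in> S"
    using \<open>G < 2 * card good\<close> h(1) by (auto simp: S_def good_def)
  then have "median_of G f \<le> f h"
    unfolding median_of_def S_def[symmetric] by (intro Min_le) (auto simp: S_def)
  also have "f h \<le> hi"
    using h(1) by (simp add: good_def)
  finally have "median_of G f \<le> hi" .
  have "median_of G f \<in> f ` S"
    unfolding median_of_def S_def[symmetric] using \<open>h \<in> S\<close> by (intro Min_in) (auto simp: S_def)
  then obtain h' where h': "h' \<in> S" "median_of G f = f h'"
    by auto
  have "lo \<le> f h'"
  proof (rule ccontr)
    assume "\<not> lo \<le> f h'"
    then have "{g\<in>{..<G}. f g \<le> f h'} \<subseteq> bad"
      by (auto simp: bad_def)
    then have "card {g\<in>{..<G}. f g \<le> f h'} \<le> card bad"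
      by (intro card_mono) (auto simp: bad_def)
    then show False
      using h'(1) assms by (auto simp: S_def bad_def)
  qed
  with \<open>median_of G f \<le> hi\<close> h'(2) show ?thesis
    by simp
qed

section \<open>The sketching algorithm\<close>

lemma run_queries_nonadaptive:
  assumes "\<And>as. Q as = Qt (length as)"
  shows "run_queries n Q A k = map (\<lambda>t. vmv n A (fst (Qt t)) (snd (Qt t))) [0..<k]"
  by (induction k) (simp_all add: assms Let_def)

text \<open>The statement fixes the random source to be a single function of type nat => real: the
  vector pair of sample s in group g is stored at the indices to_nat (g, s, b, i), where b
  selects x or y and i is the coordinate.\<close>

definition sample_of :: "(nat \<Rightarrow> real) \<Rightarrow> nat \<Rightarrow> nat \<Rightarrow> rvec \<times> rvec" where
  "sample_of \<omega> g s = (\<lambda>i. \<omega> (to_nat (g, s, False, i)), \<lambda>i. \<omega> (to_nat (g, s, True, i)))"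

definition encode_samples :: "(nat \<Rightarrow> nat \<Rightarrow> rvec \<times> rvec) \<Rightarrow> nat \<Rightarrow> real" where
  "encode_samples W k = (case from_nat k of (g, s, b, i) \<Rightarrow> (if b then snd else fst) (W g s) i)"

lemma sample_of_encode_samples [simp]: "sample_of (encode_samples W) = W"
  by (simp add: fun_eq_iff sample_of_def encode_samples_def)

definition sketch_queries :: "nat \<Rightarrow> (nat \<Rightarrow> real) \<Rightarrow> real list \<Rightarrow> rvec \<times> rvec" where
  "sketch_queries m \<omega> as = sample_of \<omega> (length as div m) (length as mod m)"

definition sketch_estimate ::
    "nat \<Rightarrow> nat \<Rightarrow> nat \<Rightarrow> (nat \<Rightarrow> real) \<Rightarrow> real list \<Rightarrow> rmat \<Rightarrow> real" where
  "sketch_estimate n m G \<omega> ans B = median_of G (\<lambda>g. \<Sum>s<m.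
     (ans ! (g * m + s) - vmv n B (fst (sample_of \<omega> g s)) (snd (sample_of \<omega> g s)))\<^sup>2)"

definition sketch_output ::
    "nat \<Rightarrow> nat \<Rightarrow> nat \<Rightarrow> rmat set \<Rightarrow> (nat \<Rightarrow> real) \<Rightarrow> real list \<Rightarrow> rmat" where
  "sketch_output n m G F \<omega> ans = arg_min_on (sketch_estimate n m G \<omega> ans) F"

lemma sketch_estimate_run_queries:
  assumes "m > 0"
  shows "sketch_estimate n m G (encode_samples W)
      (run_queries n (sketch_queries m (encode_samples W)) A (G * m)) B =
    median_of G (\<lambda>g. group_sum n m (A - B) (W g))"
proof -
  have "run_queries n (sketch_queries m (encode_samples W)) A (G * m) ! (g * m + s) =
      vmv n A (fst (W g s)) (snd (W g s))" if "g < G" "s < m" for g s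
  proof -
    have "g * m + s < (g + 1) * m"
      using that by simp
    also have "\<dots> \<le> G * m"
      using that by (intro mult_right_mono) auto
    finally have "g * m + s < G * m" .
    moreover have "run_queries n (sketch_queries m (encode_samples W)) A (G * m) =
        map (\<lambda>t. vmv n A (fst (W (t div m) (t mod m))) (snd (W (t div m) (t mod m)))) [0..<G * m]"
      by (rule run_queries_nonadaptive) (simp add: sketch_queries_def)
    ultimately show ?thesis
      using that by simp
  qed
  then show ?thesis
    unfolding sketch_estimate_def group_sum_def
    by (intro median_of_cong sum.cong refl) (simp add: vmv_diff)
qed

definition sample_groups :: "nat \<Rightarrow> nat \<Rightarrow> nat \<Rightarrow> (nat \<Rightarrow> nat \<Rightarrow> rvec \<times> rvec) pmf" where
  "sample_groups n m G =
     Pi_pmf {..<G} (\<lambda>_. (\<lambda>_. 0, \<lambda>_. 0))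
       (\<lambda>_. Pi_pmf {..<m} (\<lambda>_. 0, \<lambda>_. 0) (\<lambda>_. rademacher_pair n))"

definition median_estimates_accurate ::
    "nat \<Rightarrow> nat \<Rightarrow> nat \<Rightarrow> real \<Rightarrow> rmat set \<Rightarrow> rmat \<Rightarrow> (nat \<Rightarrow> nat \<Rightarrow> rvec \<times> rvec) \<Rightarrow> bool"
  where
  "median_estimates_accurate n m G \<eta> F A W \<longleftrightarrow> (\<forall>B\<in>F.
     \<bar>median_of G (\<lambda>g. group_sum n m (A - B) (W g)) - m * frob_sq n (A - B)\<bar>
       \<le> m * \<eta> * frob_sq n (A - B))"

lemma prob_median_estimates_accurate:
  assumes "finite F" "m > 0" "\<eta> > 0" "32 \<le> real m * \<eta>\<^sup>2" "G > 0"
    and "card F * exp (- (G / 8)) < \<delta>"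
  shows "measure_pmf.prob (sample_groups n m G) {W. median_estimates_accurate n m G \<eta> F A W} >
    1 - \<delta>"
proof -
  let ?P = "sample_groups n m G"
  define bad where "bad B w \<longleftrightarrow>
    m * \<eta> * frob_sq n (A - B) < \<bar>group_sum n m (A - B) w - m * frob_sq n (A - B)\<bar>" for B w
  define fails where "fails B = {W. G \<le> 2 * card {g\<in>{..<G}. bad B (W g)}}" for B
  have "- {W. median_estimates_accurate n m G \<eta> F A W} \<subseteq> (\<Union>B\<in>F. fails B)"
  proof
    fix W
    assume "W \<in> - {W. median_estimates_accurate n m G \<eta> F A W}"
    then obtain B where "B \<in> F" and median_bad:
      "\<not> \<bar>median_of G (\<lambda>g. group_sum n m (A - B) (W g)) - m * frob_sq n (A - B)\<bar>
         \<le> m * \<eta> * frob_sq n (A - B)"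
      by (auto simp: median_estimates_accurate_def)
    define c where "c = m * frob_sq n (A - B)"
    define e where "e = m * \<eta> * frob_sq n (A - B)"
    have "median_of G (\<lambda>g. group_sum n m (A - B) (W g)) \<notin> {c - e..c + e}"
      using median_bad by (auto simp: c_def e_def abs_le_iff)
    then have "\<not> 2 * card {g\<in>{..<G}. group_sum n m (A - B) (W g) \<notin> {c - e..c + e}} < G"
      using median_of_between[of G "\<lambda>g. group_sum n m (A - B) (W g)"] by blast
    moreover have "{g\<in>{..<G}. group_sum n m (A - B) (W g) \<notin> {c - e..c + e}} =
        {g\<in>{..<G}. bad B (W g)}"
      unfolding bad_def c_def e_def by (auto simp: abs_less_iff)
    ultimately have "\<not> 2 * card {g\<in>{..<G}. bad B (W g)} < G"
      by simp
    then show "W \<in> (\<Union>B\<in>F. fails B)"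
      using \<open>B \<in> F\<close> by (auto simp: fails_def not_less)
  qed
  then have "measure_pmf.prob ?P (- {W. median_estimates_accurate n m G \<eta> F A W}) \<le>
      measure_pmf.prob ?P (\<Union>B\<in>F. fails B)"
    by (intro measure_pmf.finite_measure_mono) auto
  also have "\<dots> \<le> (\<Sum>B\<in>F. measure_pmf.prob ?P (fails B))"
    using assms(1) by (intro measure_pmf.finite_measure_subadditive_finite) auto
  also have "\<dots> \<le> (\<Sum>B\<in>F. exp (- (G / 8)))"
  proof (intro sum_mono)
    fix B
    show "measure_pmf.prob ?P (fails B) \<le> exp (- (G / 8))"
      unfolding fails_def sample_groups_def bad_def
      by (rule prob_majority_bad_le[OF assms(5) prob_group_sum_inaccurate_le[OF assms(2-4)]])
  qed
  also have "\<dots> < \<delta>"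
    using assms(6) by simp
  finally show ?thesis
    using measure_pmf.prob_compl[of "{W. median_estimates_accurate n m G \<eta> F A W}" ?P]
    by (simp add: Compl_eq_Diff_UNIV)
qed

lemma sqrt_le_one_plus_eps_mult:
  fixes t s \<epsilon> :: real
  assumes "0 < \<epsilon>" "\<epsilon> < 1" "0 \<le> s" "t * (1 - \<epsilon> / 3) \<le> s * (1 + \<epsilon> / 3)"
  shows "sqrt t \<le> (1 + \<epsilon>) * sqrt s"
proof -
  have "(1 + \<epsilon>)\<^sup>2 * (1 - \<epsilon> / 3) = 1 + 5/3 * \<epsilon> + 1/3 * \<epsilon>\<^sup>2 - 1/3 * \<epsilon> ^ 3"
    by (simp add: power2_eq_square power3_eq_cube algebra_simps)
  moreover have "\<epsilon> ^ 3 \<le> \<epsilon>\<^sup>2"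
    using assms(1,2) by (intro power_decreasing) auto
  ultimately have "1 + \<epsilon> / 3 \<le> (1 + \<epsilon>)\<^sup>2 * (1 - \<epsilon> / 3)"
    using assms(1) by simp
  then have "s * (1 + \<epsilon> / 3) \<le> s * ((1 + \<epsilon>)\<^sup>2 * (1 - \<epsilon> / 3))"
    using assms(3) by (rule mult_left_mono)
  then have "t * (1 - \<epsilon> / 3) \<le> ((1 + \<epsilon>)\<^sup>2 * s) * (1 - \<epsilon> / 3)"
    using assms(4) by (simp add: mult_ac)
  then have "t \<le> (1 + \<epsilon>)\<^sup>2 * s"
    using assms(2) by (subst (asm) mult_le_cancel_right) auto
  then have "sqrt t \<le> sqrt ((1 + \<epsilon>)\<^sup>2 * s)"
    by (rule real_sqrt_le_mono)
  also have "\<dots> = (1 + \<epsilon>) * sqrt s"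
    using assms(1) by (simp add: real_sqrt_mult)
  finally show ?thesis .
qed

lemma frob_dist_arg_min_on_le:
  fixes est :: "rmat \<Rightarrow> real"
  assumes "finite F" "F \<noteq> {}" "0 < \<epsilon>" "\<epsilon> < 1" "c > 0"
    and accurate: "\<And>B. B \<in> F \<Longrightarrow>
      \<bar>est B - c * frob_sq n (A - B)\<bar> \<le> c * (\<epsilon> / 3) * frob_sq n (A - B)"
  shows "frob_dist n A (arg_min_on est F) \<le> (1 + \<epsilon>) * Min ((\<lambda>B. frob_dist n A B) ` F)"
proof -
  define B' where "B' = arg_min_on est F"
  have "B' \<in> F"
    unfolding B'_def using assms(1,2) by (rule arg_min_if_finite)
  have "Min ((\<lambda>B. frob_dist n A B) ` F) \<in> (\<lambda>B. frob_dist n A B) ` F"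
    using assms(1,2) by (intro Min_in) auto
  then obtain B where "B \<in> F" and B: "Min ((\<lambda>B. frob_dist n A B) ` F) = frob_dist n A B"
    by auto
  have "c * (frob_sq n (A - B') * (1 - \<epsilon> / 3)) =
      c * frob_sq n (A - B') - c * (\<epsilon> / 3) * frob_sq n (A - B')"
    by (simp add: algebra_simps)
  also have "\<dots> \<le> est B'"
    using accurate[OF \<open>B' \<in> F\<close>] by (simp only: abs_le_iff) linarith
  also have "\<dots> \<le> est B"
    unfolding B'_def by (rule arg_min_least[OF assms(1,2) \<open>B \<in> F\<close>])
  also have "\<dots> \<le> c * frob_sq n (A - B) + c * (\<epsilon> / 3) * frob_sq n (A - B)"
    using accurate[OF \<open>B \<in> F\<close>] by (simp only: abs_le_iff) linarith
  also have "\<dots> = c * (frob_sq n (A - B) * (1 + \<epsilon> / 3))"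
    by (simp add: algebra_simps)
  finally have "sqrt (frob_sq n (A - B')) \<le> (1 + \<epsilon>) * sqrt (frob_sq n (A - B))"
    using assms(3-5) frob_sq_nonneg by (intro sqrt_le_one_plus_eps_mult) auto
  then have "frob_dist n A B' \<le> (1 + \<epsilon>) * frob_dist n A B"
    by (simp add: frob_dist_eq_sqrt_frob_sq)
  then show ?thesis
    by (simp add: B B'_def)
qed

definition finds_near_best_whp ::
    "nat \<Rightarrow> rmat set \<Rightarrow> real \<Rightarrow> real \<Rightarrow> (nat \<Rightarrow> real) measure \<Rightarrow>
      ((nat \<Rightarrow> real) \<Rightarrow> real list \<Rightarrow> rvec \<times> rvec) \<Rightarrow> ((nat \<Rightarrow> real) \<Rightarrow> real list \<Rightarrow> rmat) \<Rightarrow>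
      nat \<Rightarrow> bool"
  where
  "finds_near_best_whp n F \<epsilon> \<delta> M Q out q \<longleftrightarrow> prob_space M \<and>
     (\<forall>A. measure M {\<omega> \<in> space M.
        out \<omega> (run_queries n (Q \<omega>) A q) \<in> F \<and>
        frob_dist n A (out \<omega> (run_queries n (Q \<omega>) A q)) \<le>
          (1 + \<epsilon>) * Min ((\<lambda>B. frob_dist n A B) ` F)}
      > 1 - \<delta>)"

lemma finds_near_best_whp_sketch:
  assumes "finite F" "F \<noteq> {}" "0 < \<epsilon>" "\<epsilon> < 1"
    and "m > 0" "32 \<le> real m * (\<epsilon> / 3)\<^sup>2" "G > 0" "card F * exp (- (G / 8)) < \<delta>"
  shows "finds_near_best_whp n F \<epsilon> \<delta>
    (measure_pmf (map_pmf encode_samples (sample_groups n m G)))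
    (sketch_queries m) (sketch_output n m G F) (G * m)"
  unfolding finds_near_best_whp_def
proof (intro conjI allI measure_pmf.prob_space_axioms)
  fix A
  let ?P = "sample_groups n m G"
  let ?out = "\<lambda>\<omega>. sketch_output n m G F \<omega> (run_queries n (sketch_queries m \<omega>) A (G * m))"
  define E where "E = {\<omega>. ?out \<omega> \<in> F \<and>
    frob_dist n A (?out \<omega>) \<le> (1 + \<epsilon>) * Min ((\<lambda>B. frob_dist n A B) ` F)}"
  have "encode_samples W \<in> E" if accurate: "median_estimates_accurate n m G (\<epsilon> / 3) F A W" for W
  proof -
    let ?est = "sketch_estimate n m G (encode_samples W)
      (run_queries n (sketch_queries m (encode_samples W)) A (G * m))"
    have "\<bar>?est B - m * frob_sq n (A - B)\<bar> \<le> m * (\<epsilon> / 3) * frob_sq n (A - B)" if "B \<in> F" for B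
      using accurate that
      unfolding median_estimates_accurate_def sketch_estimate_run_queries[OF assms(5)] by blast
    then have "frob_dist n A (arg_min_on ?est F) \<le> (1 + \<epsilon>) * Min ((\<lambda>B. frob_dist n A B) ` F)"
      using assms(1-5) by (intro frob_dist_arg_min_on_le[where c = "real m"]) auto
    then show ?thesis
      unfolding E_def sketch_output_def using assms(1,2) by (simp add: arg_min_if_finite)
  qed
  then have "{W. median_estimates_accurate n m G (\<epsilon> / 3) F A W} \<subseteq> encode_samples -` E"
    by blast
  then have "measure_pmf.prob ?P {W. median_estimates_accurate n m G (\<epsilon> / 3) F A W} \<le>
      measure_pmf.prob (map_pmf encode_samples ?P) E"
    by (simp add: measure_map_pmf measure_pmf.finite_measure_mono)
  moreover have "measure_pmf.prob ?P {W. median_estimates_accurate n m G (\<epsilon> / 3) F A W} > 1 - \<delta>"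
    using assms by (intro prob_median_estimates_accurate) auto
  ultimately show "measure_pmf.prob (map_pmf encode_samples ?P)
      {\<omega> \<in> space (measure_pmf (map_pmf encode_samples ?P)). ?out \<omega> \<in> F \<and>
        frob_dist n A (?out \<omega>) \<le> (1 + \<epsilon>) * Min ((\<lambda>B. frob_dist n A B) ` F)} > 1 - \<delta>"
    by (simp add: E_def)
qed

text \<open>A single candidate needs no query; this case must be separated because
  ln (card F / delta) may then be arbitrarily close to 0.\<close>

lemma finds_near_best_whp_singleton:
  assumes "0 \<le> \<epsilon>" "0 < \<delta>"
  shows "finds_near_best_whp n {B} \<epsilon> \<delta> (measure_pmf (return_pmf (\<lambda>_. 0)))
    (\<lambda>_ _. (\<lambda>_. 0, \<lambda>_. 0)) (\<lambda>_ _. B) 0"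
proof -
  have "frob_dist n A B \<le> (1 + \<epsilon>) * frob_dist n A B" for A
  proof -
    have "0 \<le> frob_dist n A B"
      by (simp add: frob_dist_def sum_nonneg)
    then show ?thesis
      using assms(1) by (simp add: distrib_right)
  qed
  then show ?thesis
    using assms(2) by (simp add: finds_near_best_whp_def measure_pmf.prob_space_axioms)
qed

text \<open>With m = ceil (288 / eps^2) samples per group, Chebyshev's bound 8 / (m (eps/3)^2) is at
  most 1/4; with G = floor (8 L) + 1 groups, where L = ln (card F / delta) >= ln 2 > 2/3,
  Hoeffding's bound exp (- G / 8) is below delta / card F, and G m <= 10 L * 289 / eps^2.\<close>

lemma sketch_sizes_exist:
  assumes "card F \<ge> 2" "0 < \<epsilon>" "\<epsilon> < 1" "0 < \<delta>" "\<delta> < 1"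
  shows "\<exists>m G. m > 0 \<and> 32 \<le> real m * (\<epsilon> / 3)\<^sup>2 \<and> G > 0 \<and> card F * exp (- (G / 8)) < \<delta> \<and>
    real (G * m) \<le> 2890 * ln (card F / \<delta>) / \<epsilon>\<^sup>2"
proof -
  define L where "L = ln (card F / \<delta>)"
  define m where "m = nat \<lceil>288 / \<epsilon>\<^sup>2\<rceil>"
  define G where "G = nat \<lfloor>8 * L\<rfloor> + 1"
  have "2 \<le> card F / \<delta>"
    using assms by (simp add: field_simps)
  then have "ln 2 \<le> L"
    unfolding L_def by (subst ln_le_cancel_iff) auto
  then have L: "2/3 \<le> L"
    using ln2_ge_two_thirds by linarith
  have "\<epsilon>\<^sup>2 < 1" "\<epsilon>\<^sup>2 > 0"
    using assms(2,3) by (auto simp: power_less_one_iff)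
  have "288 / \<epsilon>\<^sup>2 \<le> m" "m \<le> 288 / \<epsilon>\<^sup>2 + 1"
    unfolding m_def using \<open>\<epsilon>\<^sup>2 > 0\<close> by (simp_all add: of_nat_nat)
  moreover have "1 \<le> 1 / \<epsilon>\<^sup>2"
    using \<open>\<epsilon>\<^sup>2 < 1\<close> \<open>\<epsilon>\<^sup>2 > 0\<close> by simp
  ultimately have m: "288 / \<epsilon>\<^sup>2 \<le> m" "m \<le> 289 / \<epsilon>\<^sup>2"
    by simp_all
  have G: "8 * L < G" "G \<le> 10 * L"
    using L real_of_int_floor_add_one_gt[of "8 * L"] of_int_floor_le[of "8 * L"]
    by (simp_all add: G_def) linarith+
  have "m > 0"
    using m(1) \<open>\<epsilon>\<^sup>2 > 0\<close> by (intro Nat.gr0I) simp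
  have "32 \<le> real m * (\<epsilon> / 3)\<^sup>2"
    using m(1) \<open>\<epsilon>\<^sup>2 > 0\<close> by (simp add: power_divide field_simps)
  have "card F * exp (- (G / 8)) < \<delta>"
  proof -
    have "exp (- (G / 8)) < exp (- L)"
      using G(1) by simp
    also have "exp (- L) = \<delta> / card F"
      using assms by (simp add: L_def exp_minus)
    finally show ?thesis
      using assms(1) by (simp add: field_simps)
  qed
  have "real (G * m) \<le> (10 * L) * (289 / \<epsilon>\<^sup>2)"
    unfolding of_nat_mult using G m L by (intro mult_mono) auto
  then have "real (G * m) \<le> 2890 * L / \<epsilon>\<^sup>2"
    by simp
  moreover have "G > 0"
    by (simp add: G_def)
  ultimately show ?thesis
    using \<open>m > 0\<close> \<open>32 \<le> real m * (\<epsilon> / 3)\<^sup>2\<close> \<open>card F * exp (- (G / 8)) < \<delta>\<close>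
    unfolding L_def by (intro exI[of _ m] exI[of _ G]) simp
qed

lemma near_best_algorithm_exists:
  assumes "finite F" "F \<noteq> {}" "0 < \<epsilon>" "\<epsilon> < 1" "0 < \<delta>" "\<delta> < 1"
  shows "\<exists>M Q out q. finds_near_best_whp n F \<epsilon> \<delta> M Q out q \<and>
    real q \<le> 2890 * ln (card F / \<delta>) / \<epsilon>\<^sup>2"
proof (cases "card F \<ge> 2")
  case True
  then obtain m G where "m > 0" "32 \<le> real m * (\<epsilon> / 3)\<^sup>2" "G > 0" "card F * exp (- (G / 8)) < \<delta>"
    and "real (G * m) \<le> 2890 * ln (card F / \<delta>) / \<epsilon>\<^sup>2"
    using sketch_sizes_exist assms(3-6) by blast
  with assms(1-4) show ?thesis
    using finds_near_best_whp_sketch by blast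
next
  case False
  with assms(1,2) obtain B where "F = {B}"
    by (metis One_nat_def card_1_singletonE card_0_eq less_2_cases not_le)
  then have "finds_near_best_whp n F \<epsilon> \<delta> (measure_pmf (return_pmf (\<lambda>_. 0)))
      (\<lambda>_ _. (\<lambda>_. 0, \<lambda>_. 0)) (\<lambda>_ _. B) 0"
    using assms(3,5) by (simp add: finds_near_best_whp_singleton)
  moreover have "0 \<le> 2890 * ln (card F / \<delta>) / \<epsilon>\<^sup>2"
    using \<open>F = {B}\<close> assms(5,6) by simp
  ultimately show ?thesis
    by (metis of_nat_0)
qed

theorem claimA1:
  shows "\<exists>C::real. C > 0 \<and>
    (\<forall>(n::nat) (F::rmat set) (\<epsilon>::real) (\<delta>::real).
      finite F \<and> F \<noteq> {} \<and> 0 < \<epsilon> \<and> \<epsilon> < 1 \<and> 0 < \<delta> \<and> \<delta> < 1 \<longrightarrow>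
      (\<exists>(M::(nat \<Rightarrow> real) measure) (Q::(nat \<Rightarrow> real) \<Rightarrow> real list \<Rightarrow> rvec \<times> rvec)
          (out::(nat \<Rightarrow> real) \<Rightarrow> real list \<Rightarrow> rmat) (q::nat).
        prob_space M \<and>
        real q \<le> C * ln (real (card F) / \<delta>) / \<epsilon>^2 \<and>
        (\<forall>A::rmat.
          measure M {\<omega> \<in> space M.
             out \<omega> (run_queries n (Q \<omega>) A q) \<in> F \<and>
             frob_dist n A (out \<omega> (run_queries n (Q \<omega>) A q))
               \<le> (1 + \<epsilon>) * Min ((\<lambda>B. frob_dist n A B) ` F)} > 1 - \<delta>)))"
proof (intro exI[of _ 2890] conjI allI impI)
  fix n :: nat and F :: "rmat set" and \<epsilon> \<delta> :: real
  assume "finite F \<and> F \<noteq> {} \<and> 0 < \<epsilon> \<and> \<epsilon> < 1 \<and> 0 < \<delta> \<and> \<delta> < 1"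
  then obtain M Q out q where "finds_near_best_whp n F \<epsilon> \<delta> M Q out q"
    and "real q \<le> 2890 * ln (card F / \<delta>) / \<epsilon>\<^sup>2"
    using near_best_algorithm_exists by blast
  then show "\<exists>(M::(nat \<Rightarrow> real) measure) Q out q. prob_space M \<and>
      real q \<le> 2890 * ln (card F / \<delta>) / \<epsilon>\<^sup>2 \<and>
      (\<forall>A. measure M {\<omega> \<in> space M.
         out \<omega> (run_queries n (Q \<omega>) A q) \<in> F \<and>
         frob_dist n A (out \<omega> (run_queries n (Q \<omega>) A q)) \<le> (1 + \<epsilon>) * Min ((\<lambda>B. frob_dist n A B) ` F)}
       > 1 - \<delta>)"
    unfolding finds_near_best_whp_def by blast
qed simp

end
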